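(* For positive integers $s$ and $D\ge0$, the polynomial $p_{s,D}(z):=\mathbb{E}_{Y_1,\dots,Y_s}\big[T_{D_s}(z)\,\mathbf{1}\{|D_s|\le D\}\big]$ has degree at most $D$ and all its coefficients have absolute value at most $2^{2D}$.
   Context: $Y_1,\dots,Y_s$ are i.i.d. uniform $\pm1$ random variables and $D_s:=\sum_{i=1}^sY_i$. $T_k$ is the Chebyshev polynomial of the first kind ($T_0=1$, $T_1=z$, $T_{k+1}=2zT_k-T_{k-1}$), extended to negative indices by $T_{-k}=T_k$. *)

theory Defs
  imports "HOL-Computational_Algebra.Polynomial"
begin

fun cheb :: "nat \<Rightarrow> real poly" where
  "cheb 0 = 1"
| "cheb (Suc 0) = [:0, 1:]"
| "cheb (Suc (Suc n)) = [:0, 2:] * cheb (Suc n) - cheb n"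

definition chebT :: "int \<Rightarrow> real poly" where
  "chebT k = cheb (nat \<bar>k\<bar>)"

definition sign_vectors :: "nat \<Rightarrow> int list set" where
  "sign_vectors s = {ys. length ys = s \<and> set ys \<subseteq> {-1, 1}}"

text \<open>p_{s,D}(z) = E[T_{D_s}(z) 1{|D_s| \<le> D}], expectation over the uniform
  distribution on sign vectors (probability 1/2^s each), D_s = sum of the signs.\<close>
definition p_poly :: "nat \<Rightarrow> nat \<Rightarrow> real poly" where
  "p_poly s D = smult (1 / 2 ^ s)
     (\<Sum>ys\<in>sign_vectors s.
        if \<bar>sum_list ys\<bar> \<le> int D then chebT (sum_list ys) else 0)"

end

theory Submission
  imports Defs
begin

text \<open>The recurrence gives \<open>degree T_k \<le> k\<close> and, since \<open>2 * 4^(k+1) + 4^k \<le> 4^(k+2)\<close>,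
  coefficients of absolute value at most \<open>4^k\<close>. The polynomial \<open>p_{s,D}\<close> is an average of
  polynomials that are either \<open>0\<close> or \<open>T_k\<close> with \<open>|k| \<le> D\<close>, and averaging preserves both
  bounds; this works for \<open>s = 0\<close> too.\<close>

lemma degree_cheb: "degree (cheb n) \<le> n"
proof (induction n rule: cheb.induct)
  case (3 n)
  have "degree ([:0, 2:] * cheb (Suc n)) \<le> Suc (Suc n)"
    using degree_mult_le[of "[:0, 2:]" "cheb (Suc n)"] 3 by simp
  then show ?case
    using degree_diff_le[of _ "Suc (Suc n)" "cheb n"] 3 by simp
qed simp_all

lemma abs_coeff_cheb_le: "\<bar>coeff (cheb n) i\<bar> \<le> 4 ^ n"
proof (induction n arbitrary: i rule: cheb.induct)
  case 1
  then show ?case by (simp add: coeff_1)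
next
  case 2
  then show ?case by (simp add: coeff_pCons split: nat.split)
next
  case (3 n)
  have shift: "[:0, 2:] * cheb (Suc n) = pCons 0 (smult 2 (cheb (Suc n)))"
    by (simp add: mult_pCons_left)
  have "\<bar>coeff ([:0, 2:] * cheb (Suc n)) i\<bar> \<le> 2 * 4 ^ Suc n"
    using "3.IH"(1) by (cases i) (simp_all add: shift abs_mult)
  then have "\<bar>coeff (cheb (Suc (Suc n))) i\<bar> \<le> 2 * 4 ^ Suc n + 4 ^ n"
    using "3.IH"(2)[of i] by (simp add: coeff_diff)
  also have "\<dots> \<le> 4 ^ Suc (Suc n)"
    by simp
  finally show ?case .
qed

lemma abs_coeff_chebT_le:
  assumes "\<bar>k\<bar> \<le> int D"
  shows "\<bar>coeff (chebT k) i\<bar> \<le> 4 ^ D"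
proof -
  have "\<bar>coeff (chebT k) i\<bar> \<le> 4 ^ nat \<bar>k\<bar>"
    unfolding chebT_def by (rule abs_coeff_cheb_le)
  also have "\<dots> \<le> 4 ^ D"
    using assms by (intro power_increasing) auto
  finally show ?thesis .
qed

lemma degree_chebT: "degree (chebT k) \<le> nat \<bar>k\<bar>"
  unfolding chebT_def by (rule degree_cheb)

lemma abs_coeff_sum_le:
  fixes f :: "'a \<Rightarrow> 'b :: linordered_idom poly"
  assumes "\<And>x. x \<in> A \<Longrightarrow> \<bar>coeff (f x) i\<bar> \<le> B"
  shows "\<bar>coeff (\<Sum>x\<in>A. f x) i\<bar> \<le> of_nat (card A) * B"
proof -
  have "\<bar>coeff (\<Sum>x\<in>A. f x) i\<bar> \<le> (\<Sum>x\<in>A. \<bar>coeff (f x) i\<bar>)"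
    by (simp add: coeff_sum sum_abs)
  also have "\<dots> \<le> (\<Sum>x\<in>A. B)"
    using assms by (rule sum_mono)
  finally show ?thesis
    by simp
qed

lemma sign_vectors_eq_lists: "sign_vectors s = {ys. set ys \<subseteq> {-1, 1} \<and> length ys = s}"
  unfolding sign_vectors_def by auto

lemma finite_sign_vectors: "finite (sign_vectors s)"
  unfolding sign_vectors_eq_lists by (rule finite_lists_length_eq) simp

lemma card_sign_vectors: "card (sign_vectors s) = 2 ^ s"
  unfolding sign_vectors_eq_lists by (subst card_lists_length_eq) (simp_all add: numeral_2_eq_2)

theorem corollary1:
  fixes s D :: nat
  assumes "s \<ge> 1"
  shows "degree (p_poly s D) \<le> D \<and> (\<forall>i. \<bar>coeff (p_poly s D) i\<bar> \<le> 2 ^ (2 * D))"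
proof -
  define f where "f ys = (if \<bar>sum_list ys\<bar> \<le> int D then chebT (sum_list ys) else 0)" for ys
  have p_eq: "p_poly s D = smult (1 / 2 ^ s) (\<Sum>ys\<in>sign_vectors s. f ys)"
    unfolding p_poly_def f_def ..
  have "degree (f ys) \<le> D" for ys
    using degree_chebT[of "sum_list ys"] by (auto simp: f_def)
  then have "degree (\<Sum>ys\<in>sign_vectors s. f ys) \<le> D"
    by (intro degree_sum_le finite_sign_vectors)
  then have degree_bound: "degree (p_poly s D) \<le> D"
    unfolding p_eq using degree_smult_le order_trans by blast
  have "\<bar>coeff (f ys) i\<bar> \<le> 4 ^ D" for ys i
    by (simp add: f_def abs_coeff_chebT_le)
  then have "\<bar>coeff (\<Sum>ys\<in>sign_vectors s. f ys) i\<bar> \<le> 2 ^ s * 4 ^ D" for i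
    using abs_coeff_sum_le[of "sign_vectors s" f i "4 ^ D"] by (simp add: card_sign_vectors)
  then have "\<bar>coeff (p_poly s D) i\<bar> \<le> 4 ^ D" for i
    unfolding p_eq by (simp add: abs_mult field_simps)
  then show ?thesis
    using degree_bound by (simp add: power_mult)
qed

end
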